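(* Let $Q\in\mathbb{R}^{n\times n}$ be symmetric and let $F\in\mathbb{R}^{n\times k}$ have rows $f_1,\dots,f_n$ with $\|f_i\|=1$ for all $i$; put $X=FF^T$. Let $D\in\mathbb{R}^{n\times k}$ have rows $d_1,\dots,d_n$ with $\langle f_i,d_i\rangle=0$ for all $i$. For $t\ge0$ let $F(t)$ be the matrix with rows $(f_i+td_i)/\|f_i+td_i\|$, $X(t)=F(t)F(t)^T$, and \[ \Phi(t)=\frac{2}{\pi}\langle Q,\arcsin X(t)\rangle. \] Then the one-sided directional derivative $G_D=\lim_{t\to0^+}\frac{\Phi(t)-\Phi(0)}{t}$ exists and equals \[ G_D=2\sum_{i<j}Q_{ij}\mu_{ij},\qquad \mu_{ij}=\begin{cases}\dfrac{2}{\pi}\dfrac{\langle f_i,d_j\rangle+\langle f_j,d_i\rangle}{\sqrt{1-X_{ij}^2}}, & X_{ij}\in(-1,1),\\[2ex] \dfrac{2}{\pi}\|d_i+d_j\|, & X_{ij}=-1,\\[1ex] -\dfrac{2}{\pi}\|d_i-d_j\|, & X_{ij}=1.\end{cases} \] Moreover, as a function of $D$ (on the linear subspace $\{D:\langle f_i,d_i\rangle=0\ \forall i\}$), $G_D$ is the sum of a linear function $2\sum_{i<j,\,|X_{ij}|<1}Q_{ij}\mu_{ij}$, a nonpositive concave positively homogeneous function $2\sum_{i<j,\,X_{ij}=\operatorname{sgn}Q_{ij}}Q_{ij}\mu_{ij}$, and a nonnegative convex positively homogeneous function $2\sum_{i<j,\,X_{ij}=-\operatorname{sgn}Q_{ij}}Q_{ij}\mu_{ij}$;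 in particular $D\mapsto G_D$ is a difference of convex functions.
   Context: $\arcsin$ is applied entrywise to matrices (values in $[-\pi/2,\pi/2]$), $\langle A,B\rangle=\sum_{i,j}A_{ij}B_{ij}$ for matrices and the standard inner product for vectors, $\|\cdot\|$ is the Euclidean norm, and $\operatorname{sgn}$ is the sign function (pairs with $Q_{ij}=0$ contribute zero). *)

theory Defs
  imports "HOL-Analysis.Analysis"
begin

text \<open>Matrices in R^(n x k) are rendered as real^'k^'n: row i of F is F$i.\<close>

definition gram :: "real^'k^'n \<Rightarrow> real^'n^'n" where
  "gram F = F ** transpose F"

definition Fpath :: "real^'k^'n \<Rightarrow> real^'k^'n \<Rightarrow> real \<Rightarrow> real^'k^'n" where
  "Fpath F D t = (\<chi> i. (1 / norm (F$i + t *\<^sub>R D$i)) *\<^sub>R (F$i + t *\<^sub>R D$i))"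

definition Phi :: "real^'n^'n \<Rightarrow> real^'k^'n \<Rightarrow> real^'k^'n \<Rightarrow> real \<Rightarrow> real" where
  "Phi Q F D t = 2 / pi * (\<Sum>i\<in>UNIV. \<Sum>j\<in>UNIV. Q$i$j * arcsin (gram (Fpath F D t) $i$j))"

definition mu :: "real^'k^'n \<Rightarrow> real^'k^'n \<Rightarrow> 'n \<Rightarrow> 'n \<Rightarrow> real" where
  "mu F D i j =
     (let x = gram F $i$j in
      if -1 < x \<and> x < 1 then 2 / pi * (F$i \<bullet> D$j + F$j \<bullet> D$i) / sqrt (1 - x\<^sup>2)
      else if x = -1 then 2 / pi * norm (D$i + D$j)
      else if x = 1 then - (2 / pi) * norm (D$i - D$j)
      else 0)"

definition Gpart :: "(real \<Rightarrow> real \<Rightarrow> bool) \<Rightarrow> real^('n::{finite,linorder})^('n::{finite,linorder}) \<Rightarrow> real^'k::finite^'n::{finite,linorder} \<Rightarrow> real^'k::finite^'n::{finite,linorder} \<Rightarrow> real"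
  where
  "Gpart P Q F D = 2 * (\<Sum>(i,j)\<in>{(i, j). i < j \<and> P (gram F $i$j) (Q$i$j)}.
                           Q$i$j * mu F D i j)"

definition GD :: "real^('n::{finite,linorder})^('n::{finite,linorder}) \<Rightarrow> real^'k::finite^'n::{finite,linorder} \<Rightarrow> real^'k::finite^'n::{finite,linorder} \<Rightarrow> real" where
  "GD Q F D = 2 * (\<Sum>(i,j)\<in>{(i, j). i < j}. Q$i$j * mu F D i j)"

definition tangent_space :: "real^'k^'n \<Rightarrow> (real^'k^'n) set" where
  "tangent_space F = {D. \<forall>i. F$i \<bullet> D$i = 0}"

end

theory Submission
  imports Defs
begin

(*
  Row i of F(t) is sgn (f_i + t d_i), a curve on the unit sphere whose velocity at t = 0 is d_i,
  because d_i is orthogonal to f_i. Hence X_ij(t) has derivative <f_i, d_j> + <d_i, f_j> at 0,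
  and for |X_ij| < 1 the chain rule through arcsin gives (pi/2) mu_ij. At X_ij = 1 or -1, where
  arcsin is not differentiable, the rows satisfy f_j = f_i or f_j = -f_i, and the identity
  arcsin <u, v> = pi/2 - 2 arcsin (|u - v| / 2) for unit vectors turns the entry into a chord
  length, whose right derivative is |d_i - d_j| or |d_i + d_j|. Symmetry of Q folds the double
  sum into twice the sum over i < j.

  For the structure in D: the interior terms are linear, and every boundary term equals
  -(2/pi) sgn(Q_ij X_ij) |Q_ij| |d_i - X_ij d_j|, a multiple of a seminorm that is nonpositive
  exactly when X_ij = sgn Q_ij.
*)

lemma norm_add_scaleR_orthogonal:
  fixes f a :: "'a::real_inner"
  assumes "norm f = 1" "f \<bullet> a = 0"
  shows "norm (f + t *\<^sub>R a) = sqrt (1 + t\<^sup>2 * (norm a)\<^sup>2)"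
proof -
  have "(norm (f + t *\<^sub>R a))\<^sup>2 = f \<bullet> f + 2 * t * (f \<bullet> a) + t\<^sup>2 * (a \<bullet> a)"
    unfolding power2_norm_eq_inner
    by (simp add: inner_add_left inner_add_right inner_commute power2_eq_square algebra_simps)
  also have "\<dots> = 1 + t\<^sup>2 * (norm a)\<^sup>2"
    using assms by (simp add: dot_square_norm)
  finally show ?thesis
    by (metis norm_ge_zero real_sqrt_unique)
qed

lemma norm_sgn_orthogonal_ray:
  fixes f a :: "'a::real_inner"
  assumes "norm f = 1" "f \<bullet> a = 0"
  shows "norm (sgn (f + t *\<^sub>R a)) = 1"
proof -
  have "norm (f + t *\<^sub>R a) \<noteq> 0"
    by (simp add: norm_add_scaleR_orthogonal[OF assms] add_pos_nonneg add_nonneg_eq_0_iff)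
  then show ?thesis
    by (simp add: norm_sgn)
qed

lemma has_vector_derivative_sgn_orthogonal_ray:
  fixes f a :: "'a::real_inner"
  assumes "norm f = 1" "f \<bullet> a = 0"
  shows "((\<lambda>t. sgn (f + t *\<^sub>R a)) has_vector_derivative a) (at 0)"
proof -
  have "((\<lambda>t. inverse (sqrt (1 + t\<^sup>2 * (norm a)\<^sup>2))) has_real_derivative 0) (at 0)"
    by (auto intro!: derivative_eq_intros)
  moreover have "((\<lambda>t. f + t *\<^sub>R a) has_vector_derivative a) (at 0)"
    by (auto intro!: derivative_eq_intros)
  ultimately have "((\<lambda>t. (f + t *\<^sub>R a) /\<^sub>R sqrt (1 + t\<^sup>2 * (norm a)\<^sup>2)) has_vector_derivative a) (at 0)"
    using has_vector_derivative_scaleR by fastforce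
  moreover have "(\<lambda>t. sgn (f + t *\<^sub>R a)) = (\<lambda>t. (f + t *\<^sub>R a) /\<^sub>R sqrt (1 + t\<^sup>2 * (norm a)\<^sup>2))"
    by (simp add: sgn_div_norm norm_add_scaleR_orthogonal[OF assms])
  ultimately show ?thesis
    by simp
qed

lemma power2_norm_diff_unit:
  fixes u v :: "'a::real_inner"
  assumes "norm u = 1" "norm v = 1"
  shows "(norm (u - v))\<^sup>2 = 2 - 2 * (u \<bullet> v)"
  using assms by (simp add: power2_norm_eq_inner inner_diff_left inner_diff_right inner_commute norm_eq_1)

lemma unit_inner_eq_1_imp_eq:
  fixes u v :: "'a::real_inner"
  assumes "norm u = 1" "norm v = 1" "u \<bullet> v = 1"
  shows "v = u"
  using power2_norm_diff_unit[OF assms(1,2)] assms(3) by simp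

lemma arcsin_inner_unit_half_chord:
  fixes u v :: "'a::real_inner"
  assumes "norm u = 1" "norm v = 1"
  shows "arcsin (u \<bullet> v) = pi / 2 - 2 * arcsin (norm (u - v) / 2)"
proof -
  define s where "s = norm (u - v) / 2"
  define \<theta> where "\<theta> = arcsin s"
  have "norm (u - v) \<le> 2"
    using norm_triangle_ineq4[of u v] assms by simp
  then have s: "-1 \<le> s" "s \<le> 1" "0 \<le> s"
    unfolding s_def using norm_ge_zero[of "u - v"] by linarith+
  have \<theta>: "sin \<theta> = s" "0 \<le> \<theta>" "\<theta> \<le> pi / 2"
    unfolding \<theta>_def using arcsin_le_arcsin[of 0 s] arcsin_ubound[of s] s by simp_all
  have "u \<bullet> v = 1 - 2 * (sin \<theta>)\<^sup>2"
    using power2_norm_diff_unit[OF assms] by (simp add: \<theta>(1) s_def power_divide algebra_simps)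
  also have "\<dots> = sin (pi / 2 - 2 * \<theta>)"
    using cos_sin_eq[of "2 * \<theta>"] cos_double_sin[of \<theta>] by simp
  finally show ?thesis
    using \<theta>(2,3) unfolding \<theta>_def s_def by (simp add: arcsin_sin)
qed

lemma has_real_derivative_norm_at_right_zero:
  fixes \<gamma> :: "real \<Rightarrow> 'a::real_normed_vector"
  assumes "(\<gamma> has_vector_derivative v) (at 0)" "\<gamma> 0 = 0"
  shows "((\<lambda>t. norm (\<gamma> t)) has_real_derivative norm v) (at_right 0)"
proof -
  have "(\<gamma> has_derivative (\<lambda>h. h *\<^sub>R v)) (at_right 0)"
    using assms(1) by (simp add: has_vector_derivative_def has_derivative_at_withinI)
  then have "((\<lambda>t. (1 / norm t) *\<^sub>R (\<gamma> t - t *\<^sub>R v)) \<longlongrightarrow> 0) (at_right 0)"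
    using assms(2) by (simp add: has_derivative_within)
  moreover have "\<forall>\<^sub>F t in at_right 0. (1 / norm t) *\<^sub>R (\<gamma> t - t *\<^sub>R v) = (1 / t) *\<^sub>R \<gamma> t - v"
    by (rule eventually_mono[OF eventually_at_right_less]) (simp add: scaleR_diff_right)
  ultimately have "((\<lambda>t. (1 / t) *\<^sub>R \<gamma> t) \<longlongrightarrow> v) (at_right 0)"
    by (rule Lim_null[THEN iffD2, OF Lim_transform_eventually])
  then have "((\<lambda>t. norm ((1 / t) *\<^sub>R \<gamma> t)) \<longlongrightarrow> norm v) (at_right 0)"
    by (rule tendsto_norm)
  moreover have "\<forall>\<^sub>F t in at_right 0. norm ((1 / t) *\<^sub>R \<gamma> t) = (norm (\<gamma> t) - norm (\<gamma> 0)) / (t - 0)"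
    by (rule eventually_mono[OF eventually_at_right_less]) (simp add: assms(2))
  ultimately show ?thesis
    unfolding has_field_derivative_iff by (rule Lim_transform_eventually)
qed

lemma arcsin_inner_sgn_rays_has_derivative:
  fixes f g a b :: "'a::real_inner"
  assumes "norm f = 1" "norm g = 1" "f \<bullet> a = 0" "g \<bullet> b = 0" "\<bar>f \<bullet> g\<bar> < 1"
  shows "((\<lambda>t. arcsin (sgn (f + t *\<^sub>R a) \<bullet> sgn (g + t *\<^sub>R b)))
           has_real_derivative (a \<bullet> g + f \<bullet> b) / sqrt (1 - (f \<bullet> g)\<^sup>2)) (at 0)"
proof -
  have "((\<lambda>t. sgn (f + t *\<^sub>R a) \<bullet> sgn (g + t *\<^sub>R b)) has_vector_derivative
          sgn f \<bullet> b + a \<bullet> sgn g) (at 0)"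
    using bounded_bilinear.has_vector_derivative[OF bounded_bilinear_inner
        has_vector_derivative_sgn_orthogonal_ray[OF assms(1,3)]
        has_vector_derivative_sgn_orthogonal_ray[OF assms(2,4)]]
    by simp
  then have "((\<lambda>t. sgn (f + t *\<^sub>R a) \<bullet> sgn (g + t *\<^sub>R b)) has_real_derivative a \<bullet> g + f \<bullet> b) (at 0)"
    using assms(1,2) by (simp add: has_real_derivative_iff_has_vector_derivative sgn_div_norm add.commute)
  moreover have "DERIV arcsin (sgn (f + 0 *\<^sub>R a) \<bullet> sgn (g + 0 *\<^sub>R b)) :> inverse (sqrt (1 - (f \<bullet> g)\<^sup>2))"
    using assms(1,2,5) by (simp add: sgn_div_norm DERIV_arcsin)
  ultimately show ?thesis
    using DERIV_chain2 by (fastforce simp: divide_inverse mult.commute)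
qed

text \<open>
  arcsin is not differentiable at 1; the half-chord identity moves the singularity into a norm,
  which does have a right derivative.
\<close>

lemma arcsin_inner_sgn_rays_has_right_derivative_coincident:
  fixes f a b :: "'a::real_inner"
  assumes "norm f = 1" "f \<bullet> a = 0" "f \<bullet> b = 0"
  shows "((\<lambda>t. arcsin (sgn (f + t *\<^sub>R a) \<bullet> sgn (f + t *\<^sub>R b)))
           has_real_derivative - norm (a - b)) (at_right 0)"
proof -
  define w where "w t = norm (sgn (f + t *\<^sub>R a) - sgn (f + t *\<^sub>R b)) / 2" for t
  have "((\<lambda>t. sgn (f + t *\<^sub>R a) - sgn (f + t *\<^sub>R b)) has_vector_derivative a - b) (at 0)"
    using assms by (intro has_vector_derivative_diff has_vector_derivative_sgn_orthogonal_ray)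
  then have "((\<lambda>t. norm (sgn (f + t *\<^sub>R a) - sgn (f + t *\<^sub>R b))) has_real_derivative norm (a - b)) (at_right 0)"
    by (rule has_real_derivative_norm_at_right_zero) simp
  then have "(w has_real_derivative norm (a - b) / 2) (at_right 0)"
    unfolding w_def[abs_def] by (rule DERIV_cdivide)
  moreover have "DERIV arcsin (w 0) :> 1"
    using DERIV_arcsin[of 0] by (simp add: w_def)
  ultimately have "((\<lambda>t. arcsin (w t)) has_real_derivative norm (a - b) / 2) (at_right 0)"
    using DERIV_chain2 by fastforce
  then have "((\<lambda>t. pi / 2 - 2 * arcsin (w t)) has_real_derivative 0 - 2 * (norm (a - b) / 2)) (at_right 0)"
    by (intro DERIV_diff DERIV_const DERIV_cmult)
  moreover have "arcsin (sgn (f + t *\<^sub>R a) \<bullet> sgn (f + t *\<^sub>R b)) = pi / 2 - 2 * arcsin (w t)" for t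
    unfolding w_def using assms by (intro arcsin_inner_unit_half_chord norm_sgn_orthogonal_ray)
  ultimately show ?thesis
    by simp
qed

lemma arcsin_inner_sgn_rays_has_right_derivative_antipodal:
  fixes f a b :: "'a::real_inner"
  assumes "norm f = 1" "f \<bullet> a = 0" "f \<bullet> b = 0"
  shows "((\<lambda>t. arcsin (sgn (f + t *\<^sub>R a) \<bullet> sgn (- f + t *\<^sub>R b)))
           has_real_derivative norm (a + b)) (at_right 0)"
proof -
  have "arcsin (sgn (f + t *\<^sub>R a) \<bullet> sgn (- f + t *\<^sub>R b))
      = - arcsin (sgn (f + t *\<^sub>R a) \<bullet> sgn (f + t *\<^sub>R (- b)))" for t
  proof -
    define x where "x = sgn (f + t *\<^sub>R a) \<bullet> sgn (f + t *\<^sub>R (- b))"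
    have "norm (sgn (f + t *\<^sub>R a)) = 1" "norm (sgn (f + t *\<^sub>R (- b))) = 1"
      using norm_sgn_orthogonal_ray[OF assms(1,2)] norm_sgn_orthogonal_ray[of f "- b"] assms(1,3)
      by simp_all
    then have "\<bar>x\<bar> \<le> 1"
      using Cauchy_Schwarz_ineq2[of "sgn (f + t *\<^sub>R a)" "sgn (f + t *\<^sub>R (- b))"]
      unfolding x_def by (simp only: mult_1)
    moreover have "sgn (f + t *\<^sub>R a) \<bullet> sgn (- f + t *\<^sub>R b) = - x"
      unfolding x_def using sgn_minus[of "f + t *\<^sub>R (- b)"] by (simp add: inner_minus_right)
    ultimately show ?thesis
      unfolding x_def[symmetric] by (simp add: arcsin_minus)
  qed
  moreover have "((\<lambda>t. - arcsin (sgn (f + t *\<^sub>R a) \<bullet> sgn (f + t *\<^sub>R (- b))))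
      has_real_derivative norm (a + b)) (at_right 0)"
    using DERIV_minus[OF arcsin_inner_sgn_rays_has_right_derivative_coincident[of f a "- b"]] assms
    by simp
  ultimately show ?thesis
    by simp
qed

lemma sum_square_symmetric:
  fixes s :: "'n::{finite,linorder} \<Rightarrow> 'n \<Rightarrow> 'a::comm_semiring_1"
  assumes "\<And>i j. s i j = s j i"
  shows "(\<Sum>i\<in>UNIV. \<Sum>j\<in>UNIV. s i j) = 2 * (\<Sum>(i, j)\<in>{(i, j). i < j}. s i j) + (\<Sum>i\<in>UNIV. s i i)"
proof -
  have "s i j = (if i < j then s i j else 0) + (if j < i then s i j else 0) + (if i = j then s i j else 0)" for i j
    by (cases i j rule: linorder_cases) auto
  then have "(\<Sum>i\<in>UNIV. \<Sum>j\<in>UNIV. s i j)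
      = (\<Sum>i\<in>UNIV. \<Sum>j\<in>UNIV. (if i < j then s i j else 0) + (if j < i then s i j else 0) + (if i = j then s i j else 0))"
    by (intro sum.cong refl)
  also have "\<dots> = (\<Sum>i\<in>UNIV. \<Sum>j\<in>UNIV. if i < j then s i j else 0) + (\<Sum>i\<in>UNIV. \<Sum>j\<in>UNIV. if j < i then s i j else 0)
        + (\<Sum>i\<in>UNIV. \<Sum>j\<in>UNIV. if i = j then s i j else 0)"
    by (simp only: sum.distrib)
  also have "(\<Sum>i\<in>UNIV. \<Sum>j\<in>UNIV. if j < i then s i j else 0) = (\<Sum>i\<in>UNIV. \<Sum>j\<in>UNIV. if i < j then s i j else 0)"
    by (subst sum.swap) (intro sum.cong refl, metis assms)
  also have "(\<Sum>i\<in>UNIV. \<Sum>j\<in>UNIV. if i < j then s i j else 0) = (\<Sum>(i, j)\<in>{(i, j). i < j}. s i j)"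
    unfolding sum.cartesian_product by (rule sum.mono_neutral_cong_right) (auto split: if_splits)
  also have "(\<Sum>i\<in>UNIV. \<Sum>j\<in>UNIV. if i = j then s i j else 0) = (\<Sum>i\<in>UNIV. s i i)"
    by simp
  finally show ?thesis
    by (simp add: mult_2)
qed

lemma gram_nth: "gram M $ i $ j = M $ i \<bullet> M $ j"
  by (simp add: gram_def matrix_matrix_mult_def transpose_def inner_vec_def mult.commute)

lemma Fpath_nth: "Fpath F D t $ i = sgn (F $ i + t *\<^sub>R D $ i)"
  by (simp add: Fpath_def sgn_div_norm divide_inverse_commute)

lemma abs_gram_le_1:
  fixes F :: "real^'k^'n"
  assumes "\<forall>i. norm (F $ i) = 1"
  shows "\<bar>gram F $ i $ j\<bar> \<le> 1"
  using Cauchy_Schwarz_ineq2[of "F $ i" "F $ j"] assms by (simp add: gram_nth)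

lemma mu_interior:
  assumes "\<bar>gram F $ i $ j\<bar> < 1"
  shows "mu F E i j = 2 / pi * (F $ i \<bullet> E $ j + F $ j \<bullet> E $ i) / sqrt (1 - (gram F $ i $ j)\<^sup>2)"
  using assms by (simp add: mu_def Let_def abs_less_iff)

lemma mu_boundary:
  assumes "\<bar>gram F $ i $ j\<bar> = 1"
  shows "mu F E i j = - (2 / pi) * gram F $ i $ j * norm (E $ i - gram F $ i $ j *\<^sub>R E $ j)"
  using assms by (auto simp: mu_def Let_def abs_if split: if_splits)

lemma mu_commute: "mu F E i j = mu F E j i"
  by (simp add: mu_def Let_def gram_nth inner_commute norm_minus_commute add.commute)

lemma mu_diagonal:
  assumes "norm (F $ i) = 1"
  shows "mu F E i i = 0"
  using assms by (simp add: mu_boundary gram_nth norm_eq_1)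

lemma arcsin_gram_Fpath_has_right_derivative:
  fixes F D :: "real^'k^'n"
  assumes unit: "\<forall>i. norm (F $ i) = 1" and tangent: "\<forall>i. F $ i \<bullet> D $ i = 0"
  shows "((\<lambda>t. arcsin (gram (Fpath F D t) $ i $ j)) has_real_derivative pi / 2 * mu F D i j) (at_right 0)"
proof -
  have path: "gram (Fpath F D t) $ i $ j = sgn (F $ i + t *\<^sub>R D $ i) \<bullet> sgn (F $ j + t *\<^sub>R D $ j)" for t
    by (simp add: gram_nth Fpath_nth)
  have Fi: "norm (F $ i) = 1" "F $ i \<bullet> D $ i = 0" and Fj: "norm (F $ j) = 1" "F $ j \<bullet> D $ j = 0"
    using unit tangent by auto
  consider "\<bar>gram F $ i $ j\<bar> < 1" | "gram F $ i $ j = 1" | "gram F $ i $ j = -1"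
    using abs_gram_le_1[OF unit, of i j] by linarith
  then show ?thesis
  proof cases
    case 1
    have "pi / 2 * (2 / pi * x / y) = x / y" for x y :: real
      by simp
    then have "pi / 2 * mu F D i j = (F $ i \<bullet> D $ j + F $ j \<bullet> D $ i) / sqrt (1 - (gram F $ i $ j)\<^sup>2)"
      unfolding mu_interior[OF 1] .
    also have "\<dots> = (D $ i \<bullet> F $ j + F $ i \<bullet> D $ j) / sqrt (1 - (F $ i \<bullet> F $ j)\<^sup>2)"
      by (simp add: gram_nth inner_commute add.commute)
    finally have derivative_value:
      "pi / 2 * mu F D i j = (D $ i \<bullet> F $ j + F $ i \<bullet> D $ j) / sqrt (1 - (F $ i \<bullet> F $ j)\<^sup>2)" .
    have "\<bar>F $ i \<bullet> F $ j\<bar> < 1"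
      using 1 by (simp add: gram_nth)
    then show ?thesis
      unfolding path derivative_value
      by (rule has_field_derivative_at_within[OF arcsin_inner_sgn_rays_has_derivative[OF Fi(1) Fj(1) Fi(2) Fj(2)]])
  next
    case 2
    then have "F $ j = F $ i"
      using unit_inner_eq_1_imp_eq[of "F $ i" "F $ j"] Fi(1) Fj(1) by (simp add: gram_nth)
    moreover have "pi / 2 * mu F D i j = - norm (D $ i - D $ j)"
      using 2 by (simp add: mu_boundary)
    ultimately show ?thesis
      unfolding path using arcsin_inner_sgn_rays_has_right_derivative_coincident[OF Fi, of "D $ j"] Fj
      by simp
  next
    case 3
    then have "F $ j = - F $ i"
      using unit_inner_eq_1_imp_eq[of "F $ i" "- F $ j"] Fi(1) Fj(1)
      by (simp add: gram_nth minus_equation_iff)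
    moreover have "pi / 2 * mu F D i j = norm (D $ i + D $ j)"
      using 3 by (simp add: mu_boundary)
    ultimately show ?thesis
      unfolding path using arcsin_inner_sgn_rays_has_right_derivative_antipodal[OF Fi, of "D $ j"] Fj
      by simp
  qed
qed

lemma Phi_has_right_derivative:
  fixes Q :: "real^('n::{finite,linorder})^('n::{finite,linorder})"
    and F D :: "real^'k^('n::{finite,linorder})"
  assumes sym: "transpose Q = Q"
    and unit: "\<forall>i. norm (F $ i) = 1" and tangent: "\<forall>i. F $ i \<bullet> D $ i = 0"
  shows "(Phi Q F D has_real_derivative GD Q F D) (at_right 0)"
proof -
  have "((\<lambda>t. 2 / pi * (\<Sum>i\<in>UNIV. \<Sum>j\<in>UNIV. Q $ i $ j * arcsin (gram (Fpath F D t) $ i $ j)))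
      has_real_derivative 2 / pi * (\<Sum>i\<in>UNIV. \<Sum>j\<in>UNIV. Q $ i $ j * (pi / 2 * mu F D i j))) (at_right 0)"
    by (intro DERIV_cmult DERIV_sum arcsin_gram_Fpath_has_right_derivative unit tangent)
  moreover have "2 / pi * (\<Sum>i\<in>UNIV. \<Sum>j\<in>UNIV. Q $ i $ j * (pi / 2 * mu F D i j))
      = (\<Sum>i\<in>UNIV. \<Sum>j\<in>UNIV. Q $ i $ j * mu F D i j)"
    by (simp add: sum_distrib_left)
  moreover have "(\<Sum>i\<in>UNIV. \<Sum>j\<in>UNIV. Q $ i $ j * mu F D i j) = GD Q F D"
  proof -
    have "Q $ i $ j = Q $ j $ i" for i j
      using arg_cong[OF sym, of "\<lambda>M. M $ j $ i"] by (simp add: transpose_def)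
    then have "Q $ i $ j * mu F D i j = Q $ j $ i * mu F D j i" for i j
      by (simp only: mu_commute[of F D i j])
    then show ?thesis
      using unit by (simp add: sum_square_symmetric GD_def mu_diagonal)
  qed
  ultimately show ?thesis
    by (simp add: Phi_def[abs_def])
qed

lemma convex_on_sum_scaled_norm:
  fixes \<phi> :: "'i \<Rightarrow> 'j \<Rightarrow> 'a::real_vector \<Rightarrow> 'b::real_normed_vector"
  assumes "convex S" "\<And>i j. (i, j) \<in> A \<Longrightarrow> c i j \<ge> 0" "\<And>i j. linear (\<phi> i j)"
  shows "convex_on S (\<lambda>x. \<Sum>(i, j)\<in>A. c i j * norm (\<phi> i j x))"
proof (rule convex_onI[OF _ assms(1)])
  fix t :: real and x y
  assume t: "0 < t" "t < 1"
  have "c i j * norm (\<phi> i j ((1 - t) *\<^sub>R x + t *\<^sub>R y))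
      \<le> (1 - t) * (c i j * norm (\<phi> i j x)) + t * (c i j * norm (\<phi> i j y))" if "(i, j) \<in> A" for i j
  proof -
    have "norm (\<phi> i j ((1 - t) *\<^sub>R x + t *\<^sub>R y)) \<le> (1 - t) * norm (\<phi> i j x) + t * norm (\<phi> i j y)"
      using norm_triangle_ineq[of "(1 - t) *\<^sub>R \<phi> i j x" "t *\<^sub>R \<phi> i j y"] t
      by (simp add: linear_add[OF assms(3)] linear_scale[OF assms(3)])
    then have "c i j * norm (\<phi> i j ((1 - t) *\<^sub>R x + t *\<^sub>R y))
        \<le> c i j * ((1 - t) * norm (\<phi> i j x) + t * norm (\<phi> i j y))"
      by (rule mult_left_mono) (rule assms(2)[OF that])
    then show ?thesis
      by (simp only: distrib_left mult.left_commute)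
  qed
  then show "(\<Sum>(i, j)\<in>A. c i j * norm (\<phi> i j ((1 - t) *\<^sub>R x + t *\<^sub>R y)))
      \<le> (1 - t) * (\<Sum>(i, j)\<in>A. c i j * norm (\<phi> i j x)) + t * (\<Sum>(i, j)\<in>A. c i j * norm (\<phi> i j y))"
    by (simp add: sum_distrib_left sum.distrib[symmetric] case_prod_unfold sum_mono)
qed

lemma sum_scaled_norm_scaleR:
  fixes \<phi> :: "'i \<Rightarrow> 'j \<Rightarrow> 'a::real_vector \<Rightarrow> 'b::real_normed_vector"
  assumes "a \<ge> 0" "\<And>i j. linear (\<phi> i j)"
  shows "(\<Sum>(i, j)\<in>A. c i j * norm (\<phi> i j (a *\<^sub>R x))) = a * (\<Sum>(i, j)\<in>A. c i j * norm (\<phi> i j x))"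
  using assms by (simp add: linear_scale sum_distrib_left case_prod_unfold algebra_simps)

lemma linear_row_combination: "linear (\<lambda>E :: real^'k^'n. E $ i - c *\<^sub>R E $ j)"
  by (simp add: linear_iff algebra_simps)

lemma convex_tangent_space: "convex (tangent_space F)"
  by (rule subspace_imp_convex) (simp add: subspace_def tangent_space_def inner_add_right)

lemma Gpart_eq_sum_if:
  "Gpart P Q F E = 2 * (\<Sum>(i, j)\<in>{(i, j). i < j}.
                          if P (gram F $ i $ j) (Q $ i $ j) then Q $ i $ j * mu F E i j else 0)"
  unfolding Gpart_def
  by (rule arg_cong[where f = "(*) 2"], rule sum.mono_neutral_cong_left) (auto split: if_splits)

lemma GD_eq_sum_Gpart:
  fixes F :: "real^'k^('n::{finite,linorder})"
  assumes "\<forall>i. norm (F $ i) = 1"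
  shows "GD Q F E = Gpart (\<lambda>x q. \<bar>x\<bar> < 1) Q F E + Gpart (\<lambda>x q. x = sgn q) Q F E
                    + Gpart (\<lambda>x q. x = - sgn q) Q F E"
proof -
  have "Q $ i $ j * mu F E i j = (if \<bar>gram F $ i $ j\<bar> < 1 then Q $ i $ j * mu F E i j else 0)
      + (if gram F $ i $ j = sgn (Q $ i $ j) then Q $ i $ j * mu F E i j else 0)
      + (if gram F $ i $ j = - sgn (Q $ i $ j) then Q $ i $ j * mu F E i j else 0)" for i j
    \<comment> \<open>for Q $ i $ j = 0 the three conditions may overlap (sgn 0 = 0), but then the term is 0\<close>
    using abs_gram_le_1[OF assms, of i j] by (cases "Q $ i $ j" "0 :: real" rule: linorder_cases) auto
  then show ?thesis
    by (simp add: GD_def Gpart_eq_sum_if sum.distrib[symmetric] distrib_left[symmetric] case_prod_unfold)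
qed

lemma mu_interior_linear:
  assumes "\<bar>gram F $ i $ j\<bar> < 1"
  shows "mu F (a *\<^sub>R E1 + b *\<^sub>R E2) i j = a * mu F E1 i j + b * mu F E2 i j"
  using assms by (simp add: mu_interior inner_add_right algebra_simps add_divide_distrib)

lemma Gpart_interior_linear:
  "Gpart (\<lambda>x q. \<bar>x\<bar> < 1) Q F (a *\<^sub>R E1 + b *\<^sub>R E2)
     = a * Gpart (\<lambda>x q. \<bar>x\<bar> < 1) Q F E1 + b * Gpart (\<lambda>x q. \<bar>x\<bar> < 1) Q F E2"
  by (simp add: Gpart_eq_sum_if mu_interior_linear sum_distrib_left sum.distrib[symmetric]
      case_prod_unfold algebra_simps if_distrib cong: if_cong)

lemma mult_mu_of_gram_eq_sgn:
  assumes "gram F $ i $ j = sgn q"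
  shows "q * mu F E i j = - (2 / pi) * (\<bar>q\<bar> * norm (E $ i - sgn q *\<^sub>R E $ j))"
  using assms by (cases q "0 :: real" rule: linorder_cases) (simp_all add: mu_boundary)

lemma mult_mu_of_gram_eq_neg_sgn:
  assumes "gram F $ i $ j = - sgn q"
  shows "q * mu F E i j = 2 / pi * (\<bar>q\<bar> * norm (E $ i - (- sgn q) *\<^sub>R E $ j))"
  using assms by (cases q "0 :: real" rule: linorder_cases) (simp_all add: mu_boundary)

lemma Gpart_sgn_eq_norm_sum:
  "Gpart (\<lambda>x q. x = sgn q) Q F E
     = - (4 / pi) * (\<Sum>(i, j)\<in>{(i, j). i < j \<and> gram F $ i $ j = sgn (Q $ i $ j)}.
                       \<bar>Q $ i $ j\<bar> * norm (E $ i - sgn (Q $ i $ j) *\<^sub>R E $ j))"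
  unfolding Gpart_def sum_distrib_left by (rule sum.cong) (auto simp: mult_mu_of_gram_eq_sgn)

lemma Gpart_neg_sgn_eq_norm_sum:
  "Gpart (\<lambda>x q. x = - sgn q) Q F E
     = 4 / pi * (\<Sum>(i, j)\<in>{(i, j). i < j \<and> gram F $ i $ j = - sgn (Q $ i $ j)}.
                  \<bar>Q $ i $ j\<bar> * norm (E $ i - (- sgn (Q $ i $ j)) *\<^sub>R E $ j))"
  unfolding Gpart_def sum_distrib_left by (rule sum.cong) (auto simp: mult_mu_of_gram_eq_neg_sgn)

lemma Gpart_sgn_nonpos: "Gpart (\<lambda>x q. x = sgn q) Q F E \<le> 0"
  unfolding Gpart_sgn_eq_norm_sum by (intro mult_nonpos_nonneg sum_nonneg) auto

lemma Gpart_neg_sgn_nonneg: "Gpart (\<lambda>x q. x = - sgn q) Q F E \<ge> 0"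
  unfolding Gpart_neg_sgn_eq_norm_sum by (intro mult_nonneg_nonneg sum_nonneg) auto

lemma Gpart_sgn_scaleR:
  assumes "c \<ge> 0"
  shows "Gpart (\<lambda>x q. x = sgn q) Q F (c *\<^sub>R E) = c * Gpart (\<lambda>x q. x = sgn q) Q F E"
  unfolding Gpart_sgn_eq_norm_sum sum_scaled_norm_scaleR[OF assms linear_row_combination] by simp

lemma Gpart_neg_sgn_scaleR:
  assumes "c \<ge> 0"
  shows "Gpart (\<lambda>x q. x = - sgn q) Q F (c *\<^sub>R E) = c * Gpart (\<lambda>x q. x = - sgn q) Q F E"
  unfolding Gpart_neg_sgn_eq_norm_sum sum_scaled_norm_scaleR[OF assms linear_row_combination] by simp

lemma concave_on_Gpart_sgn: "concave_on (tangent_space F) (Gpart (\<lambda>x q. x = sgn q) Q F)"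
proof -
  have "convex_on (tangent_space F) (\<lambda>E. 4 / pi * (\<Sum>(i, j)\<in>{(i, j). i < j \<and> gram F $ i $ j = sgn (Q $ i $ j)}.
      \<bar>Q $ i $ j\<bar> * norm (E $ i - sgn (Q $ i $ j) *\<^sub>R E $ j)))"
    by (intro convex_on_cmul convex_on_sum_scaled_norm convex_tangent_space linear_row_combination) auto
  then show ?thesis
    by (simp add: concave_on_def Gpart_sgn_eq_norm_sum)
qed

lemma convex_on_Gpart_neg_sgn: "convex_on (tangent_space F) (Gpart (\<lambda>x q. x = - sgn q) Q F)"
  unfolding Gpart_neg_sgn_eq_norm_sum
  by (intro convex_on_cmul convex_on_sum_scaled_norm convex_tangent_space linear_row_combination) auto

lemma convex_on_Gpart_interior: "convex_on (tangent_space F) (Gpart (\<lambda>x q. \<bar>x\<bar> < 1) Q F)"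
  by (simp add: convex_on_def convex_tangent_space Gpart_interior_linear)

lemma GD_difference_of_convex:
  fixes F :: "real^'k^('n::{finite,linorder})"
  assumes "\<forall>i. norm (F $ i) = 1"
  shows "\<exists>g h. convex_on (tangent_space F) g \<and> convex_on (tangent_space F) h
           \<and> (\<forall>E\<in>tangent_space F. GD Q F E = g E - h E)"
proof (intro exI conjI)
  show "convex_on (tangent_space F) (\<lambda>E. Gpart (\<lambda>x q. \<bar>x\<bar> < 1) Q F E + Gpart (\<lambda>x q. x = - sgn q) Q F E)"
    by (intro convex_on_add convex_on_Gpart_interior convex_on_Gpart_neg_sgn)
  show "convex_on (tangent_space F) (\<lambda>E. - Gpart (\<lambda>x q. x = sgn q) Q F E)"
    using concave_on_Gpart_sgn by (simp add: concave_on_def)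
  show "\<forall>E\<in>tangent_space F. GD Q F E
      = Gpart (\<lambda>x q. \<bar>x\<bar> < 1) Q F E + Gpart (\<lambda>x q. x = - sgn q) Q F E - - Gpart (\<lambda>x q. x = sgn q) Q F E"
    using GD_eq_sum_Gpart[OF assms] by simp
qed

theorem mainTheorem7:
  fixes Q :: "real^('n::{finite,linorder})^('n::{finite,linorder})"
    and F D :: "real^'k^('n::{finite,linorder})"
  assumes symQ: "transpose Q = Q"
    and unitF: "\<forall>i. norm (F$i) = 1"
    and orthD: "\<forall>i. F$i \<bullet> D$i = 0"
  shows "((\<lambda>t. (Phi Q F D t - Phi Q F D 0) / t) \<longlongrightarrow> GD Q F D) (at_right 0)
    \<and> (let S = tangent_space F;
           L = Gpart (\<lambda>x q. \<bar>x\<bar> < 1) Q F;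
           Cc = Gpart (\<lambda>x q. x = sgn q) Q F;
           Cv = Gpart (\<lambda>x q. x = - sgn q) Q F
       in (\<forall>E\<in>S. GD Q F E = L E + Cc E + Cv E)
        \<and> (\<forall>E1\<in>S. \<forall>E2\<in>S. \<forall>a b. L (a *\<^sub>R E1 + b *\<^sub>R E2) = a * L E1 + b * L E2)
        \<and> (\<forall>E\<in>S. Cc E \<le> 0) \<and> concave_on S Cc
        \<and> (\<forall>E\<in>S. \<forall>c\<ge>0. Cc (c *\<^sub>R E) = c * Cc E)
        \<and> (\<forall>E\<in>S. Cv E \<ge> 0) \<and> convex_on S Cv
        \<and> (\<forall>E\<in>S. \<forall>c\<ge>0. Cv (c *\<^sub>R E) = c * Cv E)
        \<and> (\<exists>g h. convex_on S g \<and> convex_on S h \<and> (\<forall>E\<in>S. GD Q F E = g E - h E)))"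
proof -
  have "((\<lambda>t. (Phi Q F D t - Phi Q F D 0) / t) \<longlongrightarrow> GD Q F D) (at_right 0)"
    using Phi_has_right_derivative[OF symQ unitF orthD] by (simp add: has_field_derivative_iff)
  then show ?thesis
    unfolding Let_def
    using GD_eq_sum_Gpart[OF unitF] GD_difference_of_convex[OF unitF]
    by (simp add: Gpart_interior_linear Gpart_sgn_nonpos Gpart_neg_sgn_nonneg Gpart_sgn_scaleR
        Gpart_neg_sgn_scaleR concave_on_Gpart_sgn convex_on_Gpart_neg_sgn)
qed

end
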